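(* Assume the standing setting below. If $I$ is a dually safe feasible set, then $\mathring{\mathsf{span}}_M(I)\cap E_1$ is a base of $N^*\upharpoonright(\mathsf{span}_M(I)\cap E_1)$.
   Context: Standing setting: $E$ is countable, $M$ is a finitary matroid on $E$, $N$ is a matroid on $E$ that is a direct sum of a finitary and a cofinitary matroid. $E_0$ is the union of the finitary components of $N$ (components = connected components of the circuit hypergraph), $E_1:=E\setminus E_0$, $F^j:=F\cap E_j$. $\mathring{\mathsf{span}}_M(F):=\mathsf{span}_M(F)\setminus F$. $F$ is dually safe if $F^1\subseteq\mathsf{span}_{N^*}(\mathring{\mathsf{span}}_M(F))$. Matroids are possibly infinite; $M/X:=(M^*\upharpoonright(E\setminus X))^*$, $M.X:=M/(E\setminus X)$; $r(K)=0$ means $\varnothing$ is a base of $K$. $W$ is an $(M,N)$-wave if $M\upharpoonright W$ has a base independent in $N.W$. $\mathsf{cond}(M,N)$: for every $(M,N)$-wave $W$, $N.W$ has an $M$-independent base. A set $I$ independent in both $M$ and $N$ is feasible if $\mathsf{cond}(M/I,N/I)$ holds. *)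

theory Defs
  imports Main "HOL-Library.Countable_Set"
begin

text \<open>Possibly infinite matroids (Bruhn et al. independence axioms), given by a
ground set and a family of independent sets.\<close>

record 'a matroid =
  gnd :: "'a set"
  ind :: "'a set set"

definition base :: "'a matroid \<Rightarrow> 'a set \<Rightarrow> bool" where
  "base M B \<longleftrightarrow> B \<in> ind M \<and> (\<forall>I\<in>ind M. B \<subseteq> I \<longrightarrow> I = B)"

definition is_matroid :: "'a matroid \<Rightarrow> bool" where
  "is_matroid M \<longleftrightarrow>
     (\<forall>I\<in>ind M. I \<subseteq> gnd M) \<and>
     {} \<in> ind M \<and>
     (\<forall>I J. I \<in> ind M \<and> J \<subseteq> I \<longrightarrow> J \<in> ind M) \<and>
     (\<forall>I B. I \<in> ind M \<and> \<not> base M I \<and> base M B \<longrightarrow>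
        (\<exists>x\<in>B - I. insert x I \<in> ind M)) \<and>
     (\<forall>I X. I \<in> ind M \<and> I \<subseteq> X \<and> X \<subseteq> gnd M \<longrightarrow>
        (\<exists>J. J \<in> ind M \<and> I \<subseteq> J \<and> J \<subseteq> X \<and>
             (\<forall>K\<in>ind M. J \<subseteq> K \<and> K \<subseteq> X \<longrightarrow> K = J)))"

definition dual :: "'a matroid \<Rightarrow> 'a matroid" where
  "dual M = \<lparr>gnd = gnd M,
             ind = {I. I \<subseteq> gnd M \<and> (\<exists>B. base M B \<and> I \<subseteq> gnd M - B)}\<rparr>"

definition restrict :: "'a matroid \<Rightarrow> 'a set \<Rightarrow> 'a matroid" where
  "restrict M X = \<lparr>gnd = X, ind = {I \<in> ind M. I \<subseteq> X}\<rparr>"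

definition contract :: "'a matroid \<Rightarrow> 'a set \<Rightarrow> 'a matroid" where
  "contract M X = dual (restrict (dual M) (gnd M - X))"

definition contract_to :: "'a matroid \<Rightarrow> 'a set \<Rightarrow> 'a matroid" where
  "contract_to M X = contract M (gnd M - X)"

definition circuit :: "'a matroid \<Rightarrow> 'a set \<Rightarrow> bool" where
  "circuit M C \<longleftrightarrow> C \<subseteq> gnd M \<and> C \<notin> ind M \<and> (\<forall>D. D \<subset> C \<longrightarrow> D \<in> ind M)"

definition finitary :: "'a matroid \<Rightarrow> bool" where
  "finitary M \<longleftrightarrow> (\<forall>I. I \<subseteq> gnd M \<and> (\<forall>F. F \<subseteq> I \<and> finite F \<longrightarrow> F \<in> ind M) \<longrightarrow> I \<in> ind M)"

definition cofinitary :: "'a matroid \<Rightarrow> bool" where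
  "cofinitary M \<longleftrightarrow> finitary (dual M)"

definition fin_cofin_sum :: "'a matroid \<Rightarrow> bool" where
  "fin_cofin_sum N \<longleftrightarrow> (\<exists>A B. A \<inter> B = {} \<and> A \<union> B = gnd N \<and>
      finitary (restrict N A) \<and> cofinitary (restrict N B) \<and>
      ind N = {I1 \<union> I2 | I1 I2. I1 \<in> ind (restrict N A) \<and> I2 \<in> ind (restrict N B)})"

definition span :: "'a matroid \<Rightarrow> 'a set \<Rightarrow> 'a set" where
  "span M X = X \<union> {e \<in> gnd M. \<exists>C. circuit M C \<and> e \<in> C \<and> C \<subseteq> insert e X}"

definition span_ring :: "'a matroid \<Rightarrow> 'a set \<Rightarrow> 'a set" where
  "span_ring M X = span M X - X"

definition circ_rel :: "'a matroid \<Rightarrow> ('a \<times> 'a) set" where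
  "circ_rel M = {(x, y). \<exists>C. circuit M C \<and> x \<in> C \<and> y \<in> C}"

definition component :: "'a matroid \<Rightarrow> 'a set \<Rightarrow> bool" where
  "component M K \<longleftrightarrow> (\<exists>x\<in>gnd M. K = {y \<in> gnd M. (x, y) \<in> (circ_rel M)\<^sup>*})"

definition fin_part :: "'a matroid \<Rightarrow> 'a set" where
  "fin_part N = \<Union>{K. component N K \<and> finitary (restrict N K)}"

definition cofin_part :: "'a matroid \<Rightarrow> 'a set" where
  "cofin_part N = gnd N - fin_part N"

definition dually_safe :: "'a matroid \<Rightarrow> 'a matroid \<Rightarrow> 'a set \<Rightarrow> bool" where
  "dually_safe M N F \<longleftrightarrow> F \<inter> cofin_part N \<subseteq> span (dual N) (span_ring M F)"

definition wave :: "'a matroid \<Rightarrow> 'a matroid \<Rightarrow> 'a set \<Rightarrow> bool" where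
  "wave M N W \<longleftrightarrow> W \<subseteq> gnd M \<and> (\<exists>B. base (restrict M W) B \<and> B \<in> ind (contract_to N W))"

definition cond :: "'a matroid \<Rightarrow> 'a matroid \<Rightarrow> bool" where
  "cond M N \<longleftrightarrow> (\<forall>W. wave M N W \<longrightarrow> (\<exists>B. base (contract_to N W) B \<and> B \<in> ind M))"

definition feasible :: "'a matroid \<Rightarrow> 'a matroid \<Rightarrow> 'a set \<Rightarrow> bool" where
  "feasible M N I \<longleftrightarrow> I \<in> ind M \<and> I \<in> ind N \<and> cond (contract M I) (contract N I)"

end

theory Submission imports Defs begin

(* The ring X = span M I - I consists of loops of M/I, so X is a wave of (M/I, N/I) whose only
   M/I-independent subset is empty. Feasibility thus gives (N/I).X = (N*|X)* an empty base,
   i.e. X is coindependent in N. For maximality, dual safety puts each x in I, outside E_0,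
   into an N*-circuit C within X + x. But C meets E_0 only inside X, C - E_0 lies in the
   larger coindependent set, and N*-independence, like N-independence, splits along any union
   of components of N. *)

lemma gnd_dual [simp]: "gnd (dual M) = gnd M"
  by (simp add: dual_def)

lemma ind_dual: "ind (dual M) = {I. I \<subseteq> gnd M \<and> (\<exists>B. base M B \<and> I \<subseteq> gnd M - B)}"
  by (simp add: dual_def)

lemma gnd_restrict [simp]: "gnd (restrict M X) = X"
  by (simp add: restrict_def)

lemma ind_restrict: "ind (restrict M X) = {I \<in> ind M. I \<subseteq> X}"
  by (simp add: restrict_def)

lemma gnd_contract [simp]: "gnd (contract M X) = gnd M - X"
  by (simp add: contract_def)

lemma base_ind: "base M B \<Longrightarrow> B \<in> ind M"
  by (simp add: base_def)

lemma base_restrict_iff: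
  "base (restrict M X) B \<longleftrightarrow> B \<in> ind M \<and> B \<subseteq> X \<and> (\<forall>L\<in>ind M. B \<subseteq> L \<and> L \<subseteq> X \<longrightarrow> L = B)"
  by (auto simp: base_def ind_restrict)

lemma ind_dual_downward: "I \<in> ind (dual M) \<Longrightarrow> J \<subseteq> I \<Longrightarrow> J \<in> ind (dual M)"
  by (auto simp: ind_dual)

lemma base_dual_iff:
  assumes "\<And>B. base M B \<Longrightarrow> B \<subseteq> gnd M"
  shows "base (dual M) D \<longleftrightarrow> (\<exists>B. base M B \<and> D = gnd M - B)"
proof
  assume D: "base (dual M) D"
  then obtain B where B: "base M B" "D \<subseteq> gnd M - B"
    using base_ind[OF D] by (auto simp: ind_dual)
  have "gnd M - B \<in> ind (dual M)"
    using B(1) by (auto simp: ind_dual)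
  then show "\<exists>B. base M B \<and> D = gnd M - B"
    using D B unfolding base_def by blast
next
  assume "\<exists>B. base M B \<and> D = gnd M - B"
  then obtain B where B: "base M B" and D: "D = gnd M - B" by blast
  show "base (dual M) D" unfolding base_def
  proof (intro conjI ballI impI)
    show "D \<in> ind (dual M)" using B D by (auto simp: ind_dual)
    fix L assume L: "L \<in> ind (dual M)" "D \<subseteq> L"
    then obtain B' where B': "base M B'" "L \<subseteq> gnd M - B'" by (auto simp: ind_dual)
    have "B' \<subseteq> B" using B' L(2) D assms[OF B'(1)] by blast
    then have "B' = B" using B'(1) base_ind[OF B] unfolding base_def by blast
    then show "L = D" using B' L D by blast
  qed
qed

lemma ind_dual_dual:
  assumes down: "\<And>I J. I \<in> ind M \<Longrightarrow> J \<subseteq> I \<Longrightarrow> J \<in> ind M"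
    and ext: "\<And>I. I \<in> ind M \<Longrightarrow> \<exists>B. base M B \<and> I \<subseteq> B"
    and sub: "\<And>I. I \<in> ind M \<Longrightarrow> I \<subseteq> gnd M"
  shows "ind (dual (dual M)) = ind M"
proof -
  have bases: "base (dual M) D \<longleftrightarrow> (\<exists>B. base M B \<and> D = gnd M - B)" for D
    using base_dual_iff sub base_ind by blast
  have "ind (dual (dual M)) = {I. I \<subseteq> gnd M \<and> (\<exists>B. base M B \<and> I \<subseteq> B)}"
    unfolding ind_dual[of "dual M"] gnd_dual bases
  proof (intro Collect_cong conj_cong refl iffI)
    fix I assume "\<exists>D. (\<exists>B. base M B \<and> D = gnd M - B) \<and> I \<subseteq> gnd M - D"
    then show "\<exists>B. base M B \<and> I \<subseteq> B" using sub base_ind by blast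
  next
    fix I assume "I \<subseteq> gnd M" "\<exists>B. base M B \<and> I \<subseteq> B"
    then show "\<exists>D. (\<exists>B. base M B \<and> D = gnd M - B) \<and> I \<subseteq> gnd M - D"
      using sub base_ind by (metis Diff_Diff_Int Int_absorb1)
  qed
  also have "\<dots> = ind M"
    using down ext sub base_ind by blast
  finally show ?thesis .
qed

lemma contract_to_eq_dual_restrict_dual:
  "X \<subseteq> gnd M \<Longrightarrow> contract_to M X = dual (restrict (dual M) X)"
  by (simp add: contract_to_def contract_def double_diff)

lemma matroid_ind_subset: "is_matroid M \<Longrightarrow> I \<in> ind M \<Longrightarrow> I \<subseteq> gnd M"
  unfolding is_matroid_def by (elim conjE) blast

lemma matroid_empty_ind: "is_matroid M \<Longrightarrow> {} \<in> ind M"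
  unfolding is_matroid_def by (elim conjE)

lemma matroid_ind_downward: "is_matroid M \<Longrightarrow> I \<in> ind M \<Longrightarrow> J \<subseteq> I \<Longrightarrow> J \<in> ind M"
  unfolding is_matroid_def by (elim conjE) blast

lemma matroid_augment:
  assumes "is_matroid M" "I \<in> ind M" "\<not> base M I" "base M B"
  shows "\<exists>x\<in>B - I. insert x I \<in> ind M"
proof -
  have "\<forall>I B. I \<in> ind M \<and> \<not> base M I \<and> base M B \<longrightarrow> (\<exists>x\<in>B - I. insert x I \<in> ind M)"
    using assms(1) unfolding is_matroid_def by (elim conjE) assumption
  then show ?thesis using assms by blast
qed

lemma exists_base_restrict_superset:
  assumes "is_matroid M" "I \<in> ind M" "I \<subseteq> X" "X \<subseteq> gnd M"
  shows "\<exists>J. base (restrict M X) J \<and> I \<subseteq> J"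
proof -
  have "\<forall>I X. I \<in> ind M \<and> I \<subseteq> X \<and> X \<subseteq> gnd M \<longrightarrow>
      (\<exists>J. J \<in> ind M \<and> I \<subseteq> J \<and> J \<subseteq> X \<and> (\<forall>K\<in>ind M. J \<subseteq> K \<and> K \<subseteq> X \<longrightarrow> K = J))"
    using assms(1) unfolding is_matroid_def by (elim conjE) assumption
  from this[rule_format, OF conjI[OF assms(2) conjI[OF assms(3,4)]]]
  show ?thesis unfolding base_restrict_iff by blast
qed

lemma base_subset_gnd: "is_matroid M \<Longrightarrow> base M B \<Longrightarrow> B \<subseteq> gnd M"
  by (simp add: base_ind matroid_ind_subset)

lemma base_remove_not_base: "base M B \<Longrightarrow> y \<in> B \<Longrightarrow> \<not> base M (B - {y})"
  unfolding base_def by blast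

lemma exists_base_superset:
  assumes M: "is_matroid M" and I: "I \<in> ind M"
  shows "\<exists>B. base M B \<and> I \<subseteq> B"
proof -
  obtain B where B: "base (restrict M (gnd M)) B" "I \<subseteq> B"
    using exists_base_restrict_superset[OF M I matroid_ind_subset[OF M I]] by blast
  have "base M B"
    unfolding base_def using B(1) matroid_ind_subset[OF M] by (auto simp: base_restrict_iff)
  then show ?thesis using B(2) by blast
qed

text \<open>A maximal independent subset of a set containing a base is itself a base.\<close>

lemma exists_base_between:
  assumes M: "is_matroid M" and I: "I \<in> ind M" "I \<subseteq> X" and X: "X \<subseteq> gnd M"
    and B0: "base M B0" "B0 \<subseteq> X"
  shows "\<exists>B. base M B \<and> I \<subseteq> B \<and> B \<subseteq> X"
proof -
  obtain J where J: "J \<in> ind M" "I \<subseteq> J" "J \<subseteq> X"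
    and max: "\<forall>K\<in>ind M. J \<subseteq> K \<and> K \<subseteq> X \<longrightarrow> K = J"
    using exists_base_restrict_superset[OF M I X] unfolding base_restrict_iff by blast
  have "base M J"
  proof (rule ccontr)
    assume "\<not> base M J"
    then obtain x where "x \<in> B0 - J" "insert x J \<in> ind M"
      using matroid_augment[OF M J(1) _ B0(1)] by blast
    then show False using max B0(2) J(3) by blast
  qed
  then show ?thesis using J by blast
qed

lemma span_ring_insert_dependent:
  assumes M: "is_matroid M" and e: "e \<in> span_ring M I"
  shows "insert e I \<notin> ind M"
proof -
  obtain C where "circuit M C" "C \<subseteq> insert e I"
    using e unfolding span_ring_def span_def by blast
  then show ?thesis
    using matroid_ind_downward[OF M] unfolding circuit_def by blast
qed

lemma fundamental_circuit:
  assumes M: "is_matroid M" and I: "I \<in> ind M" and x: "x \<in> gnd M" "insert x I \<notin> ind M"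
  shows "circuit M (insert x {y \<in> I. insert x (I - {y}) \<in> ind M})" (is "circuit M ?C")
proof -
  have proper_ind: "D \<in> ind M" if D: "D \<subset> ?C" for D
  proof -
    obtain z where z: "z \<in> ?C" "z \<notin> D" using D by blast
    show ?thesis
    proof (cases "z = x")
      case True
      then have "D \<subseteq> I" using D z by blast
      then show ?thesis using matroid_ind_downward[OF M I] by blast
    next
      case False
      then have "insert x (I - {z}) \<in> ind M" "D \<subseteq> insert x (I - {z})" using D z by blast+
      then show ?thesis using matroid_ind_downward[OF M] by blast
    qed
  qed
  have "?C \<notin> ind M"
  proof
    assume C: "?C \<in> ind M"
    obtain B where B: "base M B" "I \<subseteq> B"
      using exists_base_superset[OF M I] by blast
    have B_gnd: "B \<subseteq> gnd M" using base_subset_gnd[OF M B(1)] .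
    have "?C \<union> B \<subseteq> gnd M" using x(1) B(2) B_gnd by blast
    then obtain K where K: "base M K" "?C \<subseteq> K" "K \<subseteq> ?C \<union> B"
      using exists_base_between[OF M C Un_upper1 _ B(1) Un_upper2] by blast
    have "\<not> insert x I \<subseteq> K"
      using x(2) matroid_ind_downward[OF M base_ind[OF K(1)]] by blast
    then obtain y where y: "y \<in> I" "y \<notin> K" using K(2) by blast
    then have y_dep: "insert x (I - {y}) \<notin> ind M" using K(2) by blast
    have "B - {y} \<in> ind M" using matroid_ind_downward[OF M base_ind[OF B(1)]] by blast
    moreover have "\<not> base M (B - {y})" using base_remove_not_base[OF B(1)] y(1) B(2) by blast
    ultimately obtain z where z: "z \<in> K - (B - {y})" "insert z (B - {y}) \<in> ind M"
      using matroid_augment[OF M _ _ K(1)] by blast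
    have "z \<notin> B" using z y(2) by blast
    then have "z = x" using z K(3) B(2) by blast
    moreover have "insert x (I - {y}) \<subseteq> insert x (B - {y})" using B(2) by blast
    ultimately show False using z(2) y_dep matroid_ind_downward[OF M] by blast
  qed
  then show ?thesis
    using proper_ind x(1) matroid_ind_subset[OF M I] unfolding circuit_def by blast
qed

lemma dependent_contains_circuit:
  assumes M: "is_matroid M" and J: "J \<subseteq> gnd M" "J \<notin> ind M"
  shows "\<exists>C. circuit M C \<and> C \<subseteq> J"
proof -
  obtain I where I: "I \<in> ind M" "I \<subseteq> J"
    and max: "\<forall>K\<in>ind M. I \<subseteq> K \<and> K \<subseteq> J \<longrightarrow> K = I"
    using exists_base_restrict_superset[OF M matroid_empty_ind[OF M] empty_subsetI J(1)]
    unfolding base_restrict_iff by blast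
  obtain x where x: "x \<in> J" "x \<notin> I"
    using I J(2) by (metis subsetI subset_antisym)
  then have "insert x I \<notin> ind M"
    using I(2) max by blast
  from fundamental_circuit[OF M I(1) _ this] x I(2) J(1)
  show ?thesis by blast
qed

section \<open>The dual of a matroid and contractions\<close>

lemma empty_ind_dual:
  assumes M: "is_matroid M"
  shows "{} \<in> ind (dual M)"
proof -
  obtain B where "base M B" using exists_base_superset[OF M matroid_empty_ind[OF M]] by blast
  then show ?thesis by (auto simp: ind_dual)
qed

lemma base_restrict_dual_complement:
  assumes M: "is_matroid M" and X: "X \<subseteq> gnd M" and B: "base M B"
    and BX: "base (restrict M (gnd M - X)) (B - X)"
  shows "base (restrict (dual M) X) (X - B)"
  unfolding base_restrict_iff
proof (intro conjI ballI impI)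
  show "X - B \<in> ind (dual M)" using B X by (auto simp: ind_dual)
  show "X - B \<subseteq> X" by blast
  fix L assume L: "L \<in> ind (dual M)" "X - B \<subseteq> L \<and> L \<subseteq> X"
  obtain B' where B': "base M B'" "L \<subseteq> gnd M - B'"
    using L(1) by (auto simp: ind_dual)
  have "x \<notin> B" if x: "x \<in> L" for x
  proof
    assume "x \<in> B"
    have "B - {x} \<in> ind M" using matroid_ind_downward[OF M base_ind[OF B]] by blast
    then obtain z where z: "z \<in> B' - (B - {x})" "insert z (B - {x}) \<in> ind M"
      using matroid_augment[OF M _ base_remove_not_base[OF B \<open>x \<in> B\<close>] B'(1)] by blast
    have "z \<notin> B" using z x B'(2) by blast
    moreover have "z \<notin> X" using z L(2) B'(2) \<open>z \<notin> B\<close> by blast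
    moreover have "insert z (B - X) \<subseteq> insert z (B - {x})" using x L(2) by blast
    then have "insert z (B - X) \<in> ind M" using z(2) matroid_ind_downward[OF M] by blast
    moreover have "z \<in> gnd M" using z base_subset_gnd[OF M B'(1)] by blast
    ultimately show False using BX unfolding base_restrict_iff by blast
  qed
  then show "L = X - B" using L(2) by blast
qed

lemma exists_base_restrict_dual_superset:
  assumes M: "is_matroid M" and I: "I \<in> ind (dual M)" "I \<subseteq> X" and X: "X \<subseteq> gnd M"
  shows "\<exists>D. base (restrict (dual M) X) D \<and> I \<subseteq> D"
proof -
  obtain B where B: "base M B" "I \<subseteq> gnd M - B"
    using I(1) by (auto simp: ind_dual)
  have "B - X \<in> ind M" "B - X \<subseteq> gnd M - X"
    using matroid_ind_downward[OF M base_ind[OF B(1)]] base_subset_gnd[OF M B(1)] by blast+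
  then obtain BX where BX: "base (restrict M (gnd M - X)) BX" "B - X \<subseteq> BX"
    using exists_base_restrict_superset[OF M _ _ Diff_subset] by blast
  have BX_sub: "BX \<subseteq> gnd M - X" "BX \<in> ind M"
    using BX(1) unfolding base_restrict_iff by blast+
  have "BX \<union> B \<subseteq> gnd M" using BX_sub(1) base_subset_gnd[OF M B(1)] by blast
  then obtain B2 where B2: "base M B2" "BX \<subseteq> B2" "B2 \<subseteq> BX \<union> B"
    using exists_base_between[OF M BX_sub(2) Un_upper1 _ B(1) Un_upper2] by blast
  have "B2 - X = BX" using B2 BX(2) BX_sub(1) by blast
  then have "base (restrict (dual M) X) (X - B2)"
    using base_restrict_dual_complement[OF M X B2(1)] BX(1) by simp
  moreover have "I \<subseteq> X - B2" using I(2) B(2) B2(3) BX_sub(1) by blast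
  ultimately show ?thesis by blast
qed

lemma empty_ind_contract:
  assumes M: "is_matroid M"
  shows "{} \<in> ind (contract M X)"
proof -
  obtain D where "base (restrict (dual M) (gnd M - X)) D"
    using exists_base_restrict_dual_superset[OF M empty_ind_dual[OF M]] by blast
  then show ?thesis by (auto simp: contract_def ind_dual)
qed

lemma ind_dual_contract:
  assumes M: "is_matroid M"
  shows "ind (dual (contract M X)) = {L \<in> ind (dual M). L \<subseteq> gnd M - X}"
proof -
  have "ind (dual (dual (restrict (dual M) (gnd M - X)))) = ind (restrict (dual M) (gnd M - X))"
  proof (rule ind_dual_dual)
    show "\<exists>D. base (restrict (dual M) (gnd M - X)) D \<and> I \<subseteq> D"
      if "I \<in> ind (restrict (dual M) (gnd M - X))" for I
      using that exists_base_restrict_dual_superset[OF M] by (auto simp: ind_restrict)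
  qed (auto simp: ind_restrict intro: ind_dual_downward)
  then show ?thesis by (simp add: contract_def ind_restrict)
qed

lemma restrict_dual_contract:
  "is_matroid M \<Longrightarrow> Y \<subseteq> gnd M - X \<Longrightarrow> restrict (dual (contract M X)) Y = restrict (dual M) Y"
  by (auto simp: restrict_def ind_dual_contract)

lemma insert_ind_of_ind_contract:
  assumes M: "is_matroid M" and I: "I \<in> ind M" and J: "J \<in> ind (contract M I)" and e: "e \<in> J"
  shows "insert e I \<in> ind M"
proof (rule ccontr)
  assume dep: "insert e I \<notin> ind M"
  obtain D where D: "base (restrict (dual M) (gnd M - I)) D" "J \<subseteq> gnd M - I - D"
    using J by (auto simp: contract_def ind_dual)
  have D_ind: "D \<in> ind (dual M)" "D \<subseteq> gnd M - I"
    and D_max: "\<forall>L\<in>ind (dual M). D \<subseteq> L \<and> L \<subseteq> gnd M - I \<longrightarrow> L = D"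
    using D(1) unfolding base_restrict_iff by blast+
  obtain B0 where B0: "base M B0" "D \<subseteq> gnd M - B0"
    using D_ind(1) by (auto simp: ind_dual)
  have "I \<subseteq> gnd M - D" "B0 \<subseteq> gnd M - D"
    using D_ind(2) matroid_ind_subset[OF M I] B0(2) base_subset_gnd[OF M B0(1)] by blast+
  then obtain B1 where B1: "base M B1" "I \<subseteq> B1" "B1 \<subseteq> gnd M - D"
    using exists_base_between[OF M I _ Diff_subset B0(1)] by blast
  have "e \<notin> B1"
    using dep B1 matroid_ind_downward[OF M base_ind[OF B1(1)], of "insert e I"] by blast
  then have "insert e D \<in> ind (dual M)"
    using B1 D(2) e D_ind(2) by (auto simp: ind_dual)
  then have "insert e D = D"
    using D_max D(2) D_ind(2) e by blast
  then show False using D(2) e by blast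
qed

lemma ind_contract_disjoint_span_ring:
  "is_matroid M \<Longrightarrow> I \<in> ind M \<Longrightarrow> J \<in> ind (contract M I) \<Longrightarrow> J \<inter> span_ring M I = {}"
  by (meson disjoint_iff insert_ind_of_ind_contract span_ring_insert_dependent)

section \<open>Separators\<close>

definition separator :: "'a matroid \<Rightarrow> 'a set \<Rightarrow> bool" where
  "separator M F \<longleftrightarrow> (\<forall>J. J \<subseteq> gnd M \<longrightarrow> J \<inter> F \<in> ind M \<longrightarrow> J - F \<in> ind M \<longrightarrow> J \<in> ind M)"

lemma separatorD: "separator M F \<Longrightarrow> J \<subseteq> gnd M \<Longrightarrow> J \<inter> F \<in> ind M \<Longrightarrow> J - F \<in> ind M \<Longrightarrow> J \<in> ind M"
  unfolding separator_def by blast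

lemma separator_complement:
  assumes F: "separator M F"
  shows "separator M (gnd M - F)"
  unfolding separator_def
proof (intro allI impI)
  fix J assume J: "J \<subseteq> gnd M" "J \<inter> (gnd M - F) \<in> ind M" "J - (gnd M - F) \<in> ind M"
  moreover have "J \<inter> (gnd M - F) = J - F" "J - (gnd M - F) = J \<inter> F" using J(1) by blast+
  ultimately show "J \<in> ind M" using separatorD[OF F] by simp
qed

lemma circuit_subset_fin_part:
  assumes C: "circuit N C" and z: "z \<in> C" "z \<in> fin_part N"
  shows "C \<subseteq> fin_part N"
proof
  fix y assume y: "y \<in> C"
  obtain K where K: "component N K" "finitary (restrict N K)" "z \<in> K"
    using z(2) unfolding fin_part_def by blast
  obtain a where a: "K = {w \<in> gnd N. (a, w) \<in> (circ_rel N)\<^sup>*}"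
    using K(1) unfolding component_def by blast
  have "(z, y) \<in> circ_rel N" using C z(1) y unfolding circ_rel_def by blast
  then have "(a, y) \<in> (circ_rel N)\<^sup>*" using K(3) a by auto
  moreover have "y \<in> gnd N" using C y unfolding circuit_def by blast
  ultimately have "y \<in> K" using a by blast
  then show "y \<in> fin_part N" using K(1,2) unfolding fin_part_def by blast
qed

lemma separator_fin_part:
  assumes N: "is_matroid N"
  shows "separator N (fin_part N)"
  unfolding separator_def
proof (intro allI impI)
  fix J assume J: "J \<subseteq> gnd N" "J \<inter> fin_part N \<in> ind N" "J - fin_part N \<in> ind N"
  show "J \<in> ind N"
  proof (rule ccontr)
    assume "J \<notin> ind N"
    then obtain C where C: "circuit N C" "C \<subseteq> J"
      using dependent_contains_circuit[OF N J(1)] by blast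
    have "C \<subseteq> J \<inter> fin_part N \<or> C \<subseteq> J - fin_part N"
      using circuit_subset_fin_part[OF C(1)] C(2) by blast
    then show False
      using C(1) J(2,3) matroid_ind_downward[OF N] unfolding circuit_def by blast
  qed
qed

lemma separator_base_part:
  assumes N: "is_matroid N" and F: "separator N F" and B: "base N B"
    and L: "L \<in> ind N" "B \<inter> F \<subseteq> L"
  shows "L \<inter> F \<subseteq> B"
proof -
  have "(L \<inter> F) \<union> (B - F) \<in> ind N"
  proof (rule separatorD[OF F])
    show "(L \<inter> F) \<union> (B - F) \<subseteq> gnd N"
      using matroid_ind_subset[OF N L(1)] base_subset_gnd[OF N B] by blast
    have "((L \<inter> F) \<union> (B - F)) \<inter> F = L \<inter> F" by blast
    then show "((L \<inter> F) \<union> (B - F)) \<inter> F \<in> ind N"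
      using matroid_ind_downward[OF N L(1)] by simp
    have "((L \<inter> F) \<union> (B - F)) - F = B - F" by blast
    then show "((L \<inter> F) \<union> (B - F)) - F \<in> ind N"
      using matroid_ind_downward[OF N base_ind[OF B]] by simp
  qed
  moreover have "B \<subseteq> (L \<inter> F) \<union> (B - F)" using L(2) by blast
  ultimately have "(L \<inter> F) \<union> (B - F) = B" using B unfolding base_def by blast
  then show ?thesis by blast
qed

lemma separator_base_combine:
  assumes N: "is_matroid N" and F: "separator N F" and B0: "base N B0" and B1: "base N B1"
  shows "base N ((B0 \<inter> F) \<union> (B1 - F))" (is "base N ?B")
  unfolding base_def
proof (intro conjI ballI impI)
  show B_ind: "?B \<in> ind N"
  proof (rule separatorD[OF F])
    show "?B \<subseteq> gnd N" using base_subset_gnd[OF N B0] base_subset_gnd[OF N B1] by blast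
    show "?B \<inter> F \<in> ind N" by (rule matroid_ind_downward[OF N base_ind[OF B0]]) blast
    show "?B - F \<in> ind N" by (rule matroid_ind_downward[OF N base_ind[OF B1]]) blast
  qed
  fix L assume L: "L \<in> ind N" "?B \<subseteq> L"
  have "L \<inter> F \<subseteq> B0"
    using separator_base_part[OF N F B0 L(1)] L(2) by blast
  moreover have "L \<inter> (gnd N - F) \<subseteq> B1"
    using separator_base_part[OF N separator_complement[OF F] B1 L(1)] L(2)
      base_subset_gnd[OF N B1] by blast
  ultimately show "L = ?B" using L matroid_ind_subset[OF N L(1)] by blast
qed

lemma separator_dual:
  assumes N: "is_matroid N" and F: "separator N F"
  shows "separator (dual N) F"
  unfolding separator_def
proof (intro allI impI)
  fix J assume J: "J \<subseteq> gnd (dual N)" "J \<inter> F \<in> ind (dual N)" "J - F \<in> ind (dual N)"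
  obtain B0 B1 where B0: "base N B0" "J \<inter> F \<subseteq> gnd N - B0"
    and B1: "base N B1" "J - F \<subseteq> gnd N - B1"
    using J(2,3) by (auto simp: ind_dual)
  have "J \<subseteq> gnd N - ((B0 \<inter> F) \<union> (B1 - F))" using J(1) B0(2) B1(2) by auto
  then show "J \<in> ind (dual N)"
    using separator_base_combine[OF N F B0(1) B1(1)] by (auto simp: ind_dual)
qed

section \<open>Waves of loops\<close>

lemma loops_ind_dual_of_cond:
  assumes cond: "cond M N" and X: "X \<subseteq> gnd M" "X \<subseteq> gnd N"
    and empty: "{} \<in> ind M" and loops: "\<And>J. J \<in> ind M \<Longrightarrow> J \<inter> X = {}"
    and D: "base (restrict (dual N) X) D"
  shows "X \<in> ind (dual N)"
proof -
  have N_X: "contract_to N X = dual (restrict (dual N) X)"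
    using contract_to_eq_dual_restrict_dual[OF X(2)] .
  have restrict_bases: "\<And>B. base (restrict (dual N) X) B \<Longrightarrow> B \<subseteq> gnd (restrict (dual N) X)"
    by (auto simp: base_def ind_restrict)
  have "base (restrict M X) {}"
    using empty loops by (auto simp: base_def ind_restrict)
  moreover have "{} \<in> ind (contract_to N X)"
    using D restrict_bases[OF D] by (auto simp: N_X ind_dual)
  ultimately have "wave M N X"
    unfolding wave_def using X(1) by blast
  then obtain B where B: "base (contract_to N X) B" "B \<in> ind M"
    using cond unfolding cond_def by blast
  obtain D' where D': "base (restrict (dual N) X) D'" "B = X - D'"
    using B(1) base_dual_iff[OF restrict_bases] by (auto simp: N_X)
  have "B = {}" using loops[OF B(2)] D'(2) by blast
  then have "X \<subseteq> D'" using D'(2) by blast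
  then show ?thesis
    using ind_dual_downward D'(1) by (auto simp: base_restrict_iff)
qed

lemma span_ring_ind_dual_of_feasible:
  assumes M: "is_matroid M" and N: "is_matroid N" and gnd: "gnd M = gnd N"
    and I: "feasible M N I"
  shows "span_ring M I \<in> ind (dual N)"
proof -
  have I_M: "I \<in> ind M" and cond: "cond (contract M I) (contract N I)"
    using I unfolding feasible_def by blast+
  define X where "X = span_ring M I"
  have X: "X \<subseteq> gnd N - I"
    using gnd unfolding X_def span_ring_def span_def by blast
  obtain D where "base (restrict (dual N) X) D"
    using exists_base_restrict_dual_superset[OF N empty_ind_dual[OF N]] X by blast
  then have "base (restrict (dual (contract N I)) X) D"
    using restrict_dual_contract[OF N X] by simp
  then have "X \<in> ind (dual (contract N I))"
    using loops_ind_dual_of_cond[OF cond] X gnd empty_ind_contract[OF M]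
      ind_contract_disjoint_span_ring[OF M I_M] unfolding X_def by simp
  then show ?thesis
    using ind_dual_contract[OF N] unfolding X_def by blast
qed

lemma base_restrict_dual_of_span:
  assumes N: "is_matroid N" and F: "separator (dual N) F"
    and X: "X \<in> ind (dual N)" and Y: "Y - F \<subseteq> span (dual N) X"
  shows "base (restrict (dual N) ((X \<union> Y) - F)) (X - F)"
  unfolding base_restrict_iff
proof (intro conjI ballI impI)
  show "X - F \<in> ind (dual N)" using ind_dual_downward[OF X] by blast
  show "X - F \<subseteq> (X \<union> Y) - F" by blast
  fix K assume K: "K \<in> ind (dual N)" "X - F \<subseteq> K \<and> K \<subseteq> (X \<union> Y) - F"
  have "x \<in> X" if x: "x \<in> K" for x
  proof (rule ccontr)
    assume x_X: "x \<notin> X"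
    have x_F: "x \<notin> F" using x K(2) by blast
    have "x \<in> span (dual N) X" using x x_X K(2) Y by blast
    then obtain C where C: "circuit (dual N) C" "C \<subseteq> insert x X"
      using x_X unfolding span_def by blast
    have "C \<inter> F \<subseteq> X" using C(2) x_F by blast
    then have "C \<inter> F \<in> ind (dual N)" by (rule ind_dual_downward[OF X])
    moreover have "C - F \<subseteq> K" using C(2) x K(2) by blast
    then have "C - F \<in> ind (dual N)" by (rule ind_dual_downward[OF K(1)])
    moreover have "C \<subseteq> gnd (dual N)" "C \<notin> ind (dual N)" using C(1) unfolding circuit_def by blast+
    ultimately show False using separatorD[OF F] by blast
  qed
  then show "K = X - F" using K(2) by blast
qed

theorem mainTheorem13:
  fixes E :: "'a set" and M N :: "'a matroid" and I :: "'a set"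
  assumes "countable E"
    and "is_matroid M" and "gnd M = E" and "finitary M"
    and "is_matroid N" and "gnd N = E" and "fin_cofin_sum N"
    and "dually_safe M N I" and "feasible M N I"
  shows "base (restrict (dual N) (span M I \<inter> cofin_part N)) (span_ring M I \<inter> cofin_part N)"
proof -
  note M = assms(2) and N = assms(5)
  have I_gnd: "I \<subseteq> gnd N"
    using assms(3,6,9) matroid_ind_subset[OF M] unfolding feasible_def by auto
  have span: "span M I = span_ring M I \<union> I" "span_ring M I \<subseteq> gnd N"
    using assms(3,6) unfolding span_ring_def span_def by auto
  have "I - fin_part N \<subseteq> span (dual N) (span_ring M I)"
    using assms(8) I_gnd unfolding dually_safe_def cofin_part_def by blast
  from base_restrict_dual_of_span[OF N separator_dual[OF N separator_fin_part[OF N]]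
      span_ring_ind_dual_of_feasible[OF M N _ assms(9)] this] assms(3,6)
  have "base (restrict (dual N) ((span_ring M I \<union> I) - fin_part N)) (span_ring M I - fin_part N)"
    by simp
  moreover have "(span_ring M I \<union> I) - fin_part N = span M I \<inter> cofin_part N"
    "span_ring M I - fin_part N = span_ring M I \<inter> cofin_part N"
    using span I_gnd unfolding cofin_part_def by blast+
  ultimately show ?thesis by simp
qed

end
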